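(* Let $X$ be a metric space, $U\subset X$, and $\varepsilon>0$. Let $\xi\colon U\to\ell^1(U)$ be a normed, locally supported map with $\varepsilon$-variation, and let $R\in\mathbb{N}$. Then there exists a locally supported map $\bar\xi\colon X\to\ell^1(X)$ such that (1) $\|\bar\xi_x\|_1=0$ for all $x\in X$ with $d(x,U)\ge R$; (2) $\bar\xi_x=\xi_x$ for all $x\in U$ (viewing $\ell^1(U)\subset\ell^1(X)$); (3) $\bar\xi$ has $\left((2R+1)\varepsilon+\frac1R\right)$-variation.
   Context: $\ell^1(Z)$ is the $\ell^1$-space of the underlying set of a metric space $Z$, and $\xi_x$ denotes the value of $\xi$ at $x$. A map $\xi\colon Z\to\ell^1(Z)$ has $\varepsilon$-variation if for each $k\in\mathbb{N}$ and all $x_1,x_2\in Z$ with $d(x_1,x_2)\le k$ one has $\|\xi_{x_1}-\xi_{x_2}\|_1\le k\varepsilon$. It is normed if $\|\xi_x\|_1=1$ for all $x$; it is $S$-locally supported if $\operatorname{supp}(\xi_x)\subset\bar B(x,S)$ for all $x$, and locally supported if it is $S$-locally supported for some $S>0$. *)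

theory Defs
  imports "HOL-Analysis.Analysis"
begin

text \<open>Elements of l1(A) are represented as real-valued functions on the ambient
  type that are absolutely summable and vanish outside A.\<close>

definition l1norm :: "('a \<Rightarrow> real) \<Rightarrow> real" where
  "l1norm f = infsum (\<lambda>y. \<bar>f y\<bar>) UNIV"

definition in_l1 :: "'a set \<Rightarrow> ('a \<Rightarrow> real) \<Rightarrow> bool" where
  "in_l1 A f \<longleftrightarrow> (\<lambda>y. \<bar>f y\<bar>) summable_on UNIV \<and> {y. f y \<noteq> 0} \<subseteq> A"

definition l1_map :: "'a set \<Rightarrow> ('a \<Rightarrow> 'a \<Rightarrow> real) \<Rightarrow> bool" where
  "l1_map A xi \<longleftrightarrow> (\<forall>x\<in>A. in_l1 A (xi x))"

definition has_variation :: "'a::metric_space set \<Rightarrow> ('a \<Rightarrow> 'a \<Rightarrow> real) \<Rightarrow> real \<Rightarrow> bool" where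
  "has_variation A xi e \<longleftrightarrow>
     (\<forall>k::nat. \<forall>x1\<in>A. \<forall>x2\<in>A. dist x1 x2 \<le> real k \<longrightarrow>
        l1norm (\<lambda>y. xi x1 y - xi x2 y) \<le> real k * e)"

definition normed_map :: "'a set \<Rightarrow> ('a \<Rightarrow> 'a \<Rightarrow> real) \<Rightarrow> bool" where
  "normed_map A xi \<longleftrightarrow> (\<forall>x\<in>A. l1norm (xi x) = 1)"

definition loc_supported_S :: "'a::metric_space set \<Rightarrow> ('a \<Rightarrow> 'a \<Rightarrow> real) \<Rightarrow> real \<Rightarrow> bool" where
  "loc_supported_S A xi S \<longleftrightarrow> (\<forall>x\<in>A. {y. xi x y \<noteq> 0} \<subseteq> cball x S)"

definition locally_supported :: "'a::metric_space set \<Rightarrow> ('a \<Rightarrow> 'a \<Rightarrow> real) \<Rightarrow> bool" where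
  "locally_supported A xi \<longleftrightarrow> (\<exists>S>0. loc_supported_S A xi S)"

end

theory Submission
  imports Defs
begin

text \<open>Extend \<xi> by x \<mapsto> \<phi>(x) \<xi>_{\<pi>(x)}, where \<phi>(x) = max 0 (1 - d(x,U)/R) is a
  (1/R)-Lipschitz cutoff and \<pi>(x) is a point of U closer than R to x whenever \<phi>(x) > 0.
  Since a g - b h = (a - b) g + b (g - h) = (a - b) h + a (g - h), the variation between
  x1 and x2 with d(x1,x2) \<le> k is at most |\<phi>(x1) - \<phi>(x2)| \<le> k/R plus, when both cutoffs
  are positive, the variation of \<xi> between \<pi>(x1) and \<pi>(x2), which are less than 2R + k
  apart; that term is at most (2R + k) e \<le> k (2R + 1) e.\<close>

lemma l1norm_nonneg: "l1norm g \<ge> 0"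
  unfolding l1norm_def by (rule infsum_nonneg) auto

lemma l1norm_0: "l1norm (\<lambda>y. 0) = 0"
  unfolding l1norm_def by simp

lemma l1norm_diff_commute: "l1norm (\<lambda>y. g y - h y) = l1norm (\<lambda>y. h y - g y)"
  unfolding l1norm_def by (simp add: abs_minus_commute)

lemma summable_on_abs_lincomb:
  fixes g h :: "'a \<Rightarrow> real"
  assumes g: "(\<lambda>y. \<bar>g y\<bar>) summable_on UNIV" and h: "(\<lambda>y. \<bar>h y\<bar>) summable_on UNIV"
  shows "(\<lambda>y. \<bar>a * g y - b * h y\<bar>) summable_on UNIV"
proof (rule summable_on_comparison_test)
  show "(\<lambda>y. \<bar>a\<bar> * \<bar>g y\<bar> + \<bar>b\<bar> * \<bar>h y\<bar>) summable_on UNIV"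
    by (intro summable_on_add summable_on_cmult_right g h)
  show "\<And>y. y \<in> UNIV \<Longrightarrow> \<bar>a * g y - b * h y\<bar> \<le> \<bar>a\<bar> * \<bar>g y\<bar> + \<bar>b\<bar> * \<bar>h y\<bar>"
    by (metis abs_mult abs_triangle_ineq4)
qed auto

lemma l1norm_lincomb_le:
  fixes g h :: "'a \<Rightarrow> real"
  assumes g: "(\<lambda>y. \<bar>g y\<bar>) summable_on UNIV" and h: "(\<lambda>y. \<bar>h y\<bar>) summable_on UNIV"
  shows "l1norm (\<lambda>y. a * g y - b * h y) \<le> \<bar>a - b\<bar> * l1norm g + \<bar>b\<bar> * l1norm (\<lambda>y. g y - h y)"
proof -
  have gh: "(\<lambda>y. \<bar>1 * g y - 1 * h y\<bar>) summable_on UNIV"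
    by (rule summable_on_abs_lincomb[OF g h])
  have bound: "(\<lambda>y. \<bar>a - b\<bar> * \<bar>g y\<bar> + \<bar>b\<bar> * \<bar>g y - h y\<bar>) summable_on UNIV"
    using gh by (intro summable_on_add summable_on_cmult_right g) auto
  have "l1norm (\<lambda>y. a * g y - b * h y) \<le> infsum (\<lambda>y. \<bar>a - b\<bar> * \<bar>g y\<bar> + \<bar>b\<bar> * \<bar>g y - h y\<bar>) UNIV"
    unfolding l1norm_def
  proof (rule infsum_mono[OF summable_on_abs_lincomb[OF g h] bound])
    fix y
    have "a * g y - b * h y = (a - b) * g y + b * (g y - h y)" by algebra
    then show "\<bar>a * g y - b * h y\<bar> \<le> \<bar>a - b\<bar> * \<bar>g y\<bar> + \<bar>b\<bar> * \<bar>g y - h y\<bar>"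
      by (metis abs_mult abs_triangle_ineq)
  qed
  also have "\<dots> = \<bar>a - b\<bar> * l1norm g + \<bar>b\<bar> * l1norm (\<lambda>y. g y - h y)"
    unfolding l1norm_def using gh
    by (subst infsum_add) (auto intro: summable_on_cmult_right g simp: infsum_cmult_right')
  finally show ?thesis .
qed

lemma l1norm_scaled_diff_le:
  fixes g h :: "'a \<Rightarrow> real"
  assumes g: "(\<lambda>y. \<bar>g y\<bar>) summable_on UNIV" "l1norm g = 1"
    and h: "(\<lambda>y. \<bar>h y\<bar>) summable_on UNIV" "l1norm h = 1"
    and "a \<ge> 0" "b \<ge> 0"
  shows "l1norm (\<lambda>y. a * g y - b * h y) \<le> \<bar>a - b\<bar> + min a b * l1norm (\<lambda>y. g y - h y)"
proof -
  have "l1norm (\<lambda>y. a * g y - b * h y) \<le> \<bar>a - b\<bar> + b * l1norm (\<lambda>y. g y - h y)"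
    using l1norm_lincomb_le[OF g(1) h(1), of a b] g(2) \<open>b \<ge> 0\<close> by simp
  moreover have "l1norm (\<lambda>y. a * g y - b * h y) \<le> \<bar>a - b\<bar> + a * l1norm (\<lambda>y. g y - h y)"
    using l1norm_lincomb_le[OF h(1) g(1), of b a] h(2) \<open>a \<ge> 0\<close>
    by (simp add: l1norm_diff_commute[of "\<lambda>y. a * g y"] l1norm_diff_commute[of h] abs_minus_commute)
  ultimately show ?thesis
    by (cases "a \<le> b") (simp_all add: min_def)
qed

lemma has_variationD:
  assumes "has_variation A xi e" "x1 \<in> A" "x2 \<in> A" "dist x1 x2 \<le> real k"
  shows "l1norm (\<lambda>y. xi x1 y - xi x2 y) \<le> real k * e"
  using assms unfolding has_variation_def by blast

definition cutoff :: "'a::metric_space set \<Rightarrow> real \<Rightarrow> 'a \<Rightarrow> real" where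
  "cutoff U R x = max 0 (1 - infdist x U / R)"

lemma cutoff_nonneg: "cutoff U R x \<ge> 0"
  unfolding cutoff_def by simp

lemma cutoff_le_1: "R > 0 \<Longrightarrow> cutoff U R x \<le> 1"
  unfolding cutoff_def using infdist_nonneg[of x U] by auto

lemma cutoff_eq_1: "x \<in> U \<Longrightarrow> cutoff U R x = 1"
  unfolding cutoff_def by simp

lemma infdist_less_if_cutoff_pos:
  assumes "R > 0" "cutoff U R x > 0"
  shows "infdist x U < R"
proof -
  have "1 - infdist x U / R > 0"
    using assms(2) unfolding cutoff_def by (metis max.absorb1 max.commute not_le order.refl)
  then show ?thesis
    using assms(1) by (simp add: field_simps)
qed

lemma cutoff_eq_0_if_far:
  assumes "U \<noteq> {}" "R > 0" "\<forall>u\<in>U. dist x u \<ge> R"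
  shows "cutoff U R x = 0"
proof -
  have "R \<le> infdist x U"
    using assms by (simp add: infdist_notempty cINF_greatest)
  then show ?thesis
    unfolding cutoff_def using \<open>R > 0\<close> by (simp add: field_simps)
qed

lemma cutoff_lipschitz:
  assumes "R > 0"
  shows "\<bar>cutoff U R x1 - cutoff U R x2\<bar> \<le> dist x1 x2 / R"
proof -
  have "\<bar>infdist x1 U / R - infdist x2 U / R\<bar> \<le> dist x1 x2 / R"
    using infdist_triangle_abs[of x1 U x2] assms
    by (simp add: diff_divide_distrib[symmetric] divide_right_mono)
  then show ?thesis
    unfolding cutoff_def by (simp add: abs_le_iff) linarith
qed

text \<open>The point is chosen in U even far from U, so that \<xi> is normed at it everywhere.\<close>
definition near_point :: "'a::metric_space set \<Rightarrow> real \<Rightarrow> 'a \<Rightarrow> 'a" where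
  "near_point U R x =
     (if x \<in> U then x else SOME u. u \<in> U \<and> (infdist x U < R \<longrightarrow> dist x u < R))"

lemma near_point_spec:
  assumes "U \<noteq> {}"
  shows "near_point U R x \<in> U \<and> (infdist x U < R \<longrightarrow> dist x (near_point U R x) < R)"
proof (cases "x \<in> U")
  case True
  then show ?thesis
    using infdist_nonneg[of x U] by (simp add: near_point_def)
next
  case False
  have "\<exists>u. u \<in> U \<and> (infdist x U < R \<longrightarrow> dist x u < R)"
  proof (cases "infdist x U < R")
    case True
    then show ?thesis
      using assms by (auto simp: infdist_notempty cINF_less_iff)
  qed (use assms in auto)
  from someI_ex[OF this] show ?thesis
    using False by (simp add: near_point_def)
qed

lemma dist_near_points_less:
  assumes "U \<noteq> {}" "R > 0" "cutoff U R x1 > 0" "cutoff U R x2 > 0"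
  shows "dist (near_point U R x1) (near_point U R x2) < 2 * R + dist x1 x2"
proof -
  have "dist x1 (near_point U R x1) < R" "dist x2 (near_point U R x2) < R"
    using near_point_spec[OF \<open>U \<noteq> {}\<close>] infdist_less_if_cutoff_pos assms by blast+
  then show ?thesis
    using dist_triangle[of "near_point U R x1" "near_point U R x2" x1]
      dist_triangle[of x1 "near_point U R x2" x2]
    by (simp add: dist_commute)
qed

definition extend_map :: "'a::metric_space set \<Rightarrow> ('a \<Rightarrow> 'a \<Rightarrow> real) \<Rightarrow> real \<Rightarrow> 'a \<Rightarrow> 'a \<Rightarrow> real" where
  "extend_map U xi R x y = cutoff U R x * xi (near_point U R x) y"

lemma extend_map_eq_on: "x \<in> U \<Longrightarrow> extend_map U xi R x = xi x"
  by (simp add: extend_map_def cutoff_eq_1 near_point_def fun_eq_iff)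

lemma l1_map_extend_map:
  assumes "U \<noteq> {}" "l1_map U xi"
  shows "l1_map UNIV (extend_map U xi R)"
  using assms near_point_spec[OF \<open>U \<noteq> {}\<close>]
  by (auto simp: l1_map_def in_l1_def extend_map_def abs_mult intro: summable_on_cmult_right)

lemma l1norm_extend_map_far:
  assumes "U \<noteq> {}" "R > 0" "\<forall>u\<in>U. dist x u \<ge> R"
  shows "l1norm (extend_map U xi R x) = 0"
  using cutoff_eq_0_if_far[OF assms] unfolding extend_map_def by (simp add: l1norm_0)

lemma loc_supported_extend_map:
  assumes "U \<noteq> {}" "R > 0" "loc_supported_S U xi S"
  shows "loc_supported_S UNIV (extend_map U xi R) (S + R)"
  unfolding loc_supported_S_def
proof (intro ballI subsetI)
  fix x y assume "y \<in> {y. extend_map U xi R x y \<noteq> 0}"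
  then have pos: "cutoff U R x > 0" and nz: "xi (near_point U R x) y \<noteq> 0"
    using cutoff_nonneg[of U R x] by (auto simp: extend_map_def)
  have "dist x (near_point U R x) < R" "near_point U R x \<in> U"
    using near_point_spec[OF \<open>U \<noteq> {}\<close>] infdist_less_if_cutoff_pos[OF \<open>R > 0\<close> pos] by auto
  moreover have "dist (near_point U R x) y \<le> S"
    using assms(3) nz \<open>near_point U R x \<in> U\<close> unfolding loc_supported_S_def by fastforce
  ultimately show "y \<in> cball x (S + R)"
    using dist_triangle[of x y "near_point U R x"] by simp
qed

lemma has_variation_extend_map:
  fixes R :: nat
  assumes "U \<noteq> {}" "R > 0" "e \<ge> 0"
    and "l1_map U xi" "normed_map U xi" "has_variation U xi e"
  shows "has_variation UNIV (extend_map U xi (real R)) ((2 * real R + 1) * e + 1 / real R)"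
  unfolding has_variation_def
proof (intro allI ballI impI)
  fix k :: nat and x1 x2 :: 'a
  assume dk: "dist x1 x2 \<le> real k"
  define f1 f2 where "f1 = cutoff U (real R) x1" and "f2 = cutoff U (real R) x2"
  define p1 p2 where "p1 = near_point U (real R) x1" and "p2 = near_point U (real R) x2"
  have p: "p1 \<in> U" "p2 \<in> U"
    using near_point_spec[OF \<open>U \<noteq> {}\<close>] by (auto simp: p1_def p2_def)
  show "l1norm (\<lambda>y. extend_map U xi R x1 y - extend_map U xi R x2 y)
          \<le> real k * ((2 * real R + 1) * e + 1 / real R)"
  proof (cases "k = 0")
    case True
    then show ?thesis using dk by (simp add: l1norm_0)
  next
    case False
    have "l1norm (\<lambda>y. extend_map U xi R x1 y - extend_map U xi R x2 y)
            \<le> \<bar>f1 - f2\<bar> + min f1 f2 * l1norm (\<lambda>y. xi p1 y - xi p2 y)"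
      unfolding extend_map_def f1_def f2_def p1_def p2_def
      using p assms(4,5) cutoff_nonneg
      by (intro l1norm_scaled_diff_le) (auto simp: l1_map_def in_l1_def normed_map_def p1_def p2_def)
    also have "\<dots> \<le> real k / real R + real k * (2 * real R + 1) * e"
    proof (rule add_mono)
      have "\<bar>f1 - f2\<bar> \<le> dist x1 x2 / real R"
        using cutoff_lipschitz[of "real R"] \<open>R > 0\<close> unfolding f1_def f2_def by simp
      also have "\<dots> \<le> real k / real R"
        using dk by (simp add: divide_right_mono)
      finally show "\<bar>f1 - f2\<bar> \<le> real k / real R" .
      show "min f1 f2 * l1norm (\<lambda>y. xi p1 y - xi p2 y) \<le> real k * (2 * real R + 1) * e"
      proof (cases "min f1 f2 = 0")
        case False
        then have "0 < min f1 f2"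
          unfolding f1_def f2_def by (simp add: order_less_le cutoff_nonneg)
        then have "f1 > 0" "f2 > 0"
          by simp_all
        then have "dist p1 p2 < 2 * real R + dist x1 x2"
          using dist_near_points_less[OF \<open>U \<noteq> {}\<close>] \<open>R > 0\<close>
          unfolding f1_def f2_def p1_def p2_def by simp
        then have "dist p1 p2 \<le> real (2 * R + k)"
          using dk by simp
        then have "l1norm (\<lambda>y. xi p1 y - xi p2 y) \<le> real (2 * R + k) * e"
          by (rule has_variationD[OF assms(6) p])
        also have "\<dots> \<le> real k * (2 * real R + 1) * e"
          using \<open>k \<noteq> 0\<close> \<open>e \<ge> 0\<close>
          by (intro mult_right_mono) (auto simp: algebra_simps intro: mult_le_cancel_left1[THEN iffD2])
        finally have "l1norm (\<lambda>y. xi p1 y - xi p2 y) \<le> real k * (2 * real R + 1) * e" .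
        moreover have "min f1 f2 \<le> 1"
          using cutoff_le_1[of "real R" U x1] \<open>R > 0\<close> unfolding f1_def by (simp add: min.coboundedI1)
        then have "min f1 f2 * l1norm (\<lambda>y. xi p1 y - xi p2 y) \<le> l1norm (\<lambda>y. xi p1 y - xi p2 y)"
          by (intro mult_left_le_one_le l1norm_nonneg) (auto simp: f1_def f2_def cutoff_nonneg)
        ultimately show ?thesis
          by linarith
      qed (use \<open>e \<ge> 0\<close> in simp)
    qed
    also have "\<dots> = real k * ((2 * real R + 1) * e + 1 / real R)"
      by (simp add: algebra_simps)
    finally show ?thesis .
  qed
qed

theorem lemma5p4:
  fixes U :: "'a::metric_space set"
    and xi :: "'a \<Rightarrow> 'a \<Rightarrow> real"
    and e :: real and R :: nat
  assumes "e > 0"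
    and "l1_map U xi"
    and "normed_map U xi"
    and "locally_supported U xi"
    and "has_variation U xi e"
    and "R \<ge> 1"
  shows "\<exists>xib :: 'a \<Rightarrow> 'a \<Rightarrow> real.
           l1_map UNIV xib \<and> locally_supported UNIV xib \<and>
           (\<forall>x. (\<forall>u\<in>U. dist x u \<ge> real R) \<longrightarrow> l1norm (xib x) = 0) \<and>
           (\<forall>x\<in>U. xib x = xi x) \<and>
           has_variation UNIV xib ((2 * real R + 1) * e + 1 / real R)"
proof (cases "U = {}")
  case True
  \<comment> \<open>The cutoff is useless here: infdist x {} = 0.\<close>
  show ?thesis
    using True assms(1)
    by (intro exI[of _ "\<lambda>x y. 0"])
      (auto simp: l1_map_def in_l1_def locally_supported_def loc_supported_S_def
        has_variation_def l1norm_0 intro!: exI[of _ 1])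
next
  case False
  have "R > 0" using assms(6) by simp
  obtain S where "S > 0" "loc_supported_S U xi S"
    using assms(4) unfolding locally_supported_def by blast
  show ?thesis
  proof (intro exI[of _ "extend_map U xi (real R)"] conjI allI impI ballI)
    show "l1_map UNIV (extend_map U xi (real R))"
      using False assms(2) by (rule l1_map_extend_map)
    show "locally_supported UNIV (extend_map U xi (real R))"
      using loc_supported_extend_map[OF False _ \<open>loc_supported_S U xi S\<close>, of "real R"]
        \<open>S > 0\<close> \<open>R > 0\<close>
      unfolding locally_supported_def by (metis add_pos_pos of_nat_0_less_iff)
    show "l1norm (extend_map U xi (real R) x) = 0" if "\<forall>u\<in>U. real R \<le> dist x u" for x
      using False \<open>R > 0\<close> that by (simp add: l1norm_extend_map_far)
    show "extend_map U xi (real R) x = xi x" if "x \<in> U" for x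
      using that by (rule extend_map_eq_on)
    show "has_variation UNIV (extend_map U xi (real R)) ((2 * real R + 1) * e + 1 / real R)"
      using False \<open>R > 0\<close> assms(1,2,3,5) by (simp add: has_variation_extend_map)
  qed
qed

end
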